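(* Let $X,X_H$ be real Hilbert spaces, $I_h^H\in\mathbb{L}(X;X_H)$, and $I_H^h\in\mathbb{L}(X_H;X)$ with $\mu I_H^h=(I_h^H)^*$ for some $\mu>0$. Let $F:X\to\mathbb{R}$ be Fréchet differentiable and $G:X\to\mathbb{R}\cup\{+\infty\}$ convex, proper, lower semicontinuous, and $x^k\in X$. Let $F_H:X_H\to\mathbb{R}$ be convex with $L_H$-Lipschitz gradient, $G_H^k:X_H\to\mathbb{R}\cup\{+\infty\}$ convex, proper, lower semicontinuous, and $\tau_H>0$ with $\epsilon:=2-\tau_HL_H>0$. Let $\zeta^{k,0}\in X_H$ satisfy the nonsmooth coherence condition $I_h^H\partial G(x^k)\subseteq\partial G_H^k(\zeta^{k,0})$. Define $w_H^k:=I_h^H\nabla F(x^k)-\nabla F_H(\zeta^{k,0})$, $F_H^k(\zeta):=F_H(\zeta)+\langle w_H^k,\zeta-\zeta^{k,0}\rangle$, and $\zeta^{k,j+1}:=\operatorname{prox}_{\tau_H G_H^k}(\zeta^{k,j}-\tau_H\nabla F_H^k(\zeta^{k,j}))$ for $j=0,\dots,m-1$. Let $d:=I_H^h(\zeta^{k,m}-\zeta^{k,0})$. Then $$\sup_{g\in\partial G(x^k)}\langle g+\nabla F(x^k),d\rangle\le-\frac{\epsilon}{2\mu\tau_H}\sum_{j=0}^{m-1}\|\zeta^{k,j+1}-\zeta^{k,j}\|^2\le 0.$$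
   Context: $I_h^H$ is called the restriction and $I_H^h$ the prolongation operator. $I_h^H\partial G(x^k):=\{I_h^Hg: g\in\partial G(x^k)\}$. The supremum over the empty set is $-\infty$. $\operatorname{prox}$ is the proximal operator. *)

theory Defs
  imports "HOL-Analysis.Analysis"
begin

text \<open>Extended-real-valued functions X -> R \<union> {+inf} are modelled as maps into ereal
  that never take the value -inf (part of properness).\<close>

definition econvex :: "('a::real_vector \<Rightarrow> ereal) \<Rightarrow> bool" where
  "econvex G \<longleftrightarrow> (\<forall>x y t. 0 < t \<and> t < 1 \<longrightarrow>
      G ((1 - t) *\<^sub>R x + t *\<^sub>R y) \<le> ereal (1 - t) * G x + ereal t * G y)"

definition eproper :: "('a \<Rightarrow> ereal) \<Rightarrow> bool" where
  "eproper G \<longleftrightarrow> (\<forall>x. G x \<noteq> -\<infinity>) \<and> (\<exists>x. G x < \<infinity>)"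

definition elsc :: "('a::topological_space \<Rightarrow> ereal) \<Rightarrow> bool" where
  "elsc G \<longleftrightarrow> (\<forall>x. G x \<le> Liminf (at x) G)"

definition subdiff :: "('a::real_inner \<Rightarrow> ereal) \<Rightarrow> 'a \<Rightarrow> 'a set" where
  "subdiff G x = {g. G x < \<infinity> \<and> (\<forall>y. G x + ereal (inner g (y - x)) \<le> G y)}"

definition prox :: "real \<Rightarrow> ('a::real_inner \<Rightarrow> ereal) \<Rightarrow> 'a \<Rightarrow> 'a" where
  "prox \<tau> G v = (THE u. \<forall>z. G u + ereal ((norm (u - v))\<^sup>2 / (2 * \<tau>))
                              \<le> G z + ereal ((norm (z - v))\<^sup>2 / (2 * \<tau>)))"

end

theory Submission
  imports Defs
begin

text \<open>Every proximal-gradient step on the coarse model F_H^k + G_H^k decreases it by at least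
  (2 - \<tau>L)/(2\<tau>) times the squared step length: combine the descent lemma for the L-smooth part
  with the variational inequality characterising the prox. Telescoping bounds the total decrease
  from above, while the gradient inequality for F_H^k at \<zeta>^0 and the subgradient inequality for
  R g \<in> \<partial>G_H^k(\<zeta>^0) (coherence) bound it from below by -\<langle>R g + \<nabla>F_H^k(\<zeta>^0), \<zeta>^m - \<zeta>^0\<rangle>.
  The first-order correction w makes \<nabla>F_H^k(\<zeta>^0) = R \<nabla>F(x^k), and R = \<mu> P^* turns that pairing
  into \<mu>\<langle>g + \<nabla>F(x^k), d\<rangle>. The prox is well defined because the prox objective is strongly convex,
  bounded below by the affine minorant a subgradient provides, and lower semicontinuous, so
  minimizing sequences are Cauchy and their limit is the unique minimizer.\<close>

lemma has_real_derivative_along_line: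
  fixes f :: "'a::real_inner \<Rightarrow> real"
  assumes "\<And>z. (f has_derivative (\<lambda>h. inner (df z) h)) (at z)"
  shows "((\<lambda>t. f (a + t *\<^sub>R d)) has_real_derivative inner (df (a + t *\<^sub>R d)) d) (at t within S)"
proof -
  have "((\<lambda>t. a + t *\<^sub>R d) has_derivative (\<lambda>h. h *\<^sub>R d)) (at t within S)"
    by (auto intro!: derivative_eq_intros)
  from has_derivative_compose[OF this assms]
  have "((\<lambda>t. f (a + t *\<^sub>R d)) has_derivative (\<lambda>h. inner (df (a + t *\<^sub>R d)) (h *\<^sub>R d))) (at t within S)"
    by (simp add: o_def)
  then show ?thesis
    by (rule has_derivative_imp_has_field_derivative) simp
qed

lemma lipschitz_gradient_upper_bound:
  fixes f :: "'a::real_inner \<Rightarrow> real"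
  assumes df: "\<And>z. (f has_derivative (\<lambda>h. inner (df z) h)) (at z)"
    and lip: "\<And>a b. norm (df a - df b) \<le> L * norm (a - b)"
  shows "f u \<le> f z + inner (df z) (u - z) + L / 2 * (norm (u - z))\<^sup>2"
proof -
  define d where "d = u - z"
  define \<phi> where "\<phi> t = f (z + t *\<^sub>R d) - t * inner (df z) d - L * t\<^sup>2 * (norm d)\<^sup>2 / 2" for t
  have "\<phi> 1 \<le> \<phi> 0"
  proof (rule DERIV_nonpos_imp_nonincreasing[where f=\<phi>])
    fix t :: real assume t: "0 \<le> t" "t \<le> 1"
    have D: "(\<phi> has_real_derivative inner (df (z + t *\<^sub>R d)) d - inner (df z) d - L * t * (norm d)\<^sup>2) (at t)"
      unfolding \<phi>_def[abs_def]
      by (rule has_real_derivative_along_line[OF df] derivative_eq_intros refl | simp)+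
    have "inner (df (z + t *\<^sub>R d)) d - inner (df z) d = inner (df (z + t *\<^sub>R d) - df z) d"
      by (simp add: inner_diff_left)
    also have "\<dots> \<le> norm (df (z + t *\<^sub>R d) - df z) * norm d"
      by (rule norm_cauchy_schwarz)
    also have "\<dots> \<le> L * norm (t *\<^sub>R d) * norm d"
      using lip[of "z + t *\<^sub>R d" z] by (simp add: mult_right_mono)
    also have "\<dots> = L * t * (norm d)\<^sup>2"
      using t by (simp add: power2_eq_square)
    finally show "\<exists>y. (\<phi> has_real_derivative y) (at t) \<and> y \<le> 0"
      using D by force
  qed simp
  then show ?thesis
    unfolding \<phi>_def d_def by (simp add: algebra_simps)
qed

lemma convex_on_gradient_lower_bound:
  fixes f :: "'a::real_inner \<Rightarrow> real"
  assumes cv: "convex_on UNIV f"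
    and df: "\<And>z. (f has_derivative (\<lambda>h. inner (df z) h)) (at z)"
  shows "f x + inner (df x) (y - x) \<le> f y"
proof -
  define h where "h t = f (x + t *\<^sub>R (y - x))" for t :: real
  have "convex_on UNIV h"
  proof (rule convex_onI)
    fix t a b :: real assume t: "0 < t" "t < 1"
    have "x + ((1 - t) * a + t * b) *\<^sub>R (y - x)
        = (1 - t) *\<^sub>R (x + a *\<^sub>R (y - x)) + t *\<^sub>R (x + b *\<^sub>R (y - x))"
      by (simp add: algebra_simps)
    then show "h ((1 - t) *\<^sub>R a + t *\<^sub>R b) \<le> (1 - t) * h a + t * h b"
      unfolding h_def using convex_onD[OF cv, of t "x + a *\<^sub>R (y - x)" "x + b *\<^sub>R (y - x)"] t
      by simp
  qed simp
  moreover have "(h has_real_derivative inner (df x) (y - x)) (at 0 within UNIV)"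
    unfolding h_def[abs_def] using has_real_derivative_along_line[OF df, of x "y - x" 0 UNIV] by simp
  ultimately have "inner (df x) (y - x) * (1 - 0) \<le> h 1 - h 0"
    by (intro convex_on_imp_above_tangent) auto
  then show ?thesis
    unfolding h_def by simp
qed

lemma le_of_le_plus_small:
  fixes a b K :: real
  assumes "K \<ge> 0" and "\<And>t. 0 < t \<Longrightarrow> t < 1 \<Longrightarrow> a \<le> b + t * K"
  shows "a \<le> b"
proof -
  have "((\<lambda>t. b + t * K) \<longlongrightarrow> b + 0 * K) (at_right 0)"
    by (intro tendsto_intros)
  moreover have "eventually (\<lambda>t. a \<le> b + t * K) (at_right (0::real))"
    using eventually_at_right_real[of 0 1] by (auto elim: eventually_mono intro: assms(2))
  ultimately show ?thesis
    by (auto intro: tendsto_lowerbound)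
qed

lemma quadratic_lower_bound:
  fixes \<tau> n s :: real
  assumes "\<tau> > 0"
  shows "- (\<tau> * n\<^sup>2 / 2) \<le> - (n * s) + s\<^sup>2 / (2 * \<tau>)"
proof -
  have "0 \<le> (s - \<tau> * n)\<^sup>2" by simp
  then show ?thesis
    using assms by (simp add: field_simps power2_eq_square)
qed

lemma Cauchy_of_dist_squared_bound:
  fixes x :: "nat \<Rightarrow> 'a::metric_space"
  assumes bound: "\<And>m n. (dist (x m) (x n))\<^sup>2 \<le> e m + e n" and e: "e \<longlonglongrightarrow> 0"
  shows "Cauchy x"
proof (rule metric_CauchyI)
  fix \<epsilon> :: real assume "\<epsilon> > 0"
  then have "eventually (\<lambda>n. e n < \<epsilon>\<^sup>2 / 2) sequentially"
    using e by (intro order_tendstoD) auto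
  then obtain N where N: "\<And>n. n \<ge> N \<Longrightarrow> e n < \<epsilon>\<^sup>2 / 2"
    by (auto simp: eventually_sequentially)
  have "dist (x m) (x n) < \<epsilon>" if "m \<ge> N" "n \<ge> N" for m n
  proof -
    have "(dist (x m) (x n))\<^sup>2 < \<epsilon>\<^sup>2"
      using bound[of m n] N[OF that(1)] N[OF that(2)] by linarith
    then show ?thesis
      using \<open>\<epsilon> > 0\<close> by (simp add: power_less_imp_less_base)
  qed
  then show "\<exists>N. \<forall>m\<ge>N. \<forall>n\<ge>N. dist (x m) (x n) < \<epsilon>"
    by blast
qed

lemma norm_midpoint_diff_squared:
  fixes a b v :: "'a::real_inner"
  shows "(norm ((1/2) *\<^sub>R a + (1/2) *\<^sub>R b - v))\<^sup>2
    = ((norm (a - v))\<^sup>2 + (norm (b - v))\<^sup>2) / 2 - (norm (a - b))\<^sup>2 / 4"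
  unfolding power2_norm_eq_inner
  by (simp add: inner_diff_left inner_diff_right inner_add_left inner_add_right inner_commute field_simps)

definition prox_minimizer :: "real \<Rightarrow> ('a::real_inner \<Rightarrow> ereal) \<Rightarrow> 'a \<Rightarrow> 'a \<Rightarrow> bool" where
  "prox_minimizer \<tau> G v u \<longleftrightarrow>
     (\<forall>z. G u + ereal ((norm (u - v))\<^sup>2 / (2 * \<tau>)) \<le> G z + ereal ((norm (z - v))\<^sup>2 / (2 * \<tau>)))"

lemma prox_minimizer_less_infinity:
  assumes "prox_minimizer \<tau> G v u" and "G a < \<infinity>"
  shows "G u < \<infinity>"
proof -
  have "G u + ereal ((norm (u - v))\<^sup>2 / (2 * \<tau>)) \<le> G a + ereal ((norm (a - v))\<^sup>2 / (2 * \<tau>))"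
    using assms(1) unfolding prox_minimizer_def by blast
  then show ?thesis
    using assms(2) by auto
qed

lemma prox_minimizer_segment_inequality:
  fixes G :: "'a::real_inner \<Rightarrow> ereal"
  assumes cv: "econvex G" and tau: "\<tau> > 0"
    and u: "prox_minimizer \<tau> G v u" and gu: "G u = ereal gu" and gy: "G y = ereal gy"
    and t: "0 < t" "t < 1"
  shows "gu \<le> gy + inner (u - v) (y - u) / \<tau> + t * ((norm (y - u))\<^sup>2 / (2 * \<tau>))"
proof -
  define z where "z = (1 - t) *\<^sub>R u + t *\<^sub>R y"
  have "G z \<le> ereal (1 - t) * G u + ereal t * G y"
    using cv t unfolding econvex_def z_def by blast
  also have "\<dots> = ereal ((1 - t) * gu + t * gy)"
    using gu gy by simp
  finally have Gz: "G z \<le> ereal ((1 - t) * gu + t * gy)" .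
  have "ereal (gu + (norm (u - v))\<^sup>2 / (2 * \<tau>)) \<le> G z + ereal ((norm (z - v))\<^sup>2 / (2 * \<tau>))"
    using u[unfolded prox_minimizer_def, rule_format, of z] gu by simp
  also have "\<dots> \<le> ereal ((1 - t) * gu + t * gy) + ereal ((norm (z - v))\<^sup>2 / (2 * \<tau>))"
    using Gz by (rule add_right_mono)
  finally have "t * gu \<le> t * gy + ((norm (z - v))\<^sup>2 - (norm (u - v))\<^sup>2) / (2 * \<tau>)"
    by (simp add: algebra_simps diff_divide_distrib)
  moreover have "(norm (z - v))\<^sup>2 = (norm (u - v))\<^sup>2 + 2 * t * inner (u - v) (y - u) + t\<^sup>2 * (norm (y - u))\<^sup>2"
  proof -
    have zv: "z - v = (u - v) + t *\<^sub>R (y - u)"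
      unfolding z_def by (simp add: algebra_simps)
    show ?thesis
      unfolding zv power2_norm_eq_inner
      by (simp add: inner_commute power2_eq_square algebra_simps)
  qed
  then have "((norm (z - v))\<^sup>2 - (norm (u - v))\<^sup>2) / (2 * \<tau>)
      = t * (inner (u - v) (y - u) / \<tau> + t * ((norm (y - u))\<^sup>2 / (2 * \<tau>)))"
    using tau by (simp add: field_simps power2_eq_square)
  ultimately have "t * gu \<le> t * (gy + inner (u - v) (y - u) / \<tau> + t * ((norm (y - u))\<^sup>2 / (2 * \<tau>)))"
    by (simp add: algebra_simps)
  then show ?thesis
    using t by simp
qed

lemma prox_minimizer_variational_inequality:
  fixes G :: "'a::real_inner \<Rightarrow> ereal"
  assumes cv: "econvex G" and tau: "\<tau> > 0"
    and u: "prox_minimizer \<tau> G v u" and gu: "G u = ereal gu"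
  shows "G u + ereal (inner ((1/\<tau>) *\<^sub>R (v - u)) (y - u)) \<le> G y"
proof (cases "G y")
  case MInf
  then show ?thesis
    using u[unfolded prox_minimizer_def, rule_format, of y] gu by simp
next
  case (real gy)
  have "gu \<le> gy + inner (u - v) (y - u) / \<tau>"
  proof (rule le_of_le_plus_small)
    show "0 \<le> (norm (y - u))\<^sup>2 / (2 * \<tau>)"
      using tau by simp
  qed (rule prox_minimizer_segment_inequality[OF cv tau u gu real])
  moreover have "inner ((1/\<tau>) *\<^sub>R (v - u)) (y - u) = - inner (u - v) (y - u) / \<tau>"
    by (simp add: inner_diff_left)
  ultimately show ?thesis
    using gu real by simp
qed simp

lemma prox_minimizer_unique:
  fixes G :: "'a::real_inner \<Rightarrow> ereal"
  assumes cv: "econvex G" and tau: "\<tau> > 0"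
    and u0: "prox_minimizer \<tau> G v u0" and g0: "G u0 = ereal g0"
    and u1: "prox_minimizer \<tau> G v u1" and g1: "G u1 = ereal g1"
  shows "u1 = u0"
proof -
  have "g1 + inner ((1/\<tau>) *\<^sub>R (v - u1)) (u0 - u1) \<le> g0"
    using prox_minimizer_variational_inequality[OF cv tau u1 g1, of u0] g0 g1 by simp
  moreover have "g0 + inner ((1/\<tau>) *\<^sub>R (v - u0)) (u1 - u0) \<le> g1"
    using prox_minimizer_variational_inequality[OF cv tau u0 g0, of u1] g0 g1 by simp
  moreover have "inner ((1/\<tau>) *\<^sub>R (v - u1)) (u0 - u1) + inner ((1/\<tau>) *\<^sub>R (v - u0)) (u1 - u0)
      = (1/\<tau>) * inner (u0 - u1) (u0 - u1)"
    by (simp add: inner_commute algebra_simps)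
  ultimately have "(1/\<tau>) * inner (u0 - u1) (u0 - u1) \<le> 0"
    by linarith
  then show ?thesis
    using tau inner_ge_zero[of "u0 - u1"] by (simp add: divide_le_0_iff)
qed

lemma eventually_less_elsc:
  assumes "elsc G" and "c < G u"
  shows "eventually (\<lambda>y. c < G y) (nhds u)"
proof -
  have "c < Liminf (at u) G"
    using assms unfolding elsc_def by (meson less_le_trans)
  then have "eventually (\<lambda>y. c < G y) (at u)"
    using le_Liminf_iff[of "Liminf (at u) G" "at u" G] by auto
  then show ?thesis
    using assms(2) unfolding eventually_at_filter by (auto elim: eventually_mono)
qed

lemma elsc_le_limit:
  assumes lsc: "elsc G" and xu: "x \<longlonglongrightarrow> u"
    and bound: "\<And>n. G (x n) \<le> ereal (b n)" and b: "b \<longlonglongrightarrow> \<beta>"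
  shows "G u \<le> ereal \<beta>"
proof (rule ccontr)
  assume "\<not> G u \<le> ereal \<beta>"
  then obtain c where c: "\<beta> < c" "ereal c < G u"
    using ereal_dense2[of "ereal \<beta>" "G u"] by (auto simp: not_le)
  have "eventually (\<lambda>n. ereal c < G (x n)) sequentially"
    using eventually_less_elsc[OF lsc c(2)] xu unfolding tendsto_def filterlim_iff by blast
  moreover have "eventually (\<lambda>n. b n < c) sequentially"
    using b c(1) by (rule order_tendstoD)
  ultimately have "eventually (\<lambda>n. ereal c < G (x n) \<and> b n < c) sequentially"
    by (rule eventually_conj)
  then obtain n where "ereal c < G (x n)" "b n < c"
    by (auto simp: eventually_sequentially)
  then show False
    using bound[of n] by (meson ereal_less_eq(3) less_le_not_le order_trans)
qed

lemma prox_objective_near_minimal_close: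
  fixes G :: "'a::real_inner \<Rightarrow> ereal"
  assumes cv: "econvex G" and tau: "\<tau> > 0"
    and lb: "\<And>z. ereal \<beta> \<le> G z + ereal ((norm (z - v))\<^sup>2 / (2 * \<tau>))"
    and ga: "G a = ereal ga" and gb: "G b = ereal gb"
  shows "(norm (a - b))\<^sup>2 \<le> 4 * \<tau> *
    ((ga + (norm (a - v))\<^sup>2 / (2 * \<tau>) - \<beta>) + (gb + (norm (b - v))\<^sup>2 / (2 * \<tau>) - \<beta>))"
proof -
  define md where "md = (1/2) *\<^sub>R a + (1/2) *\<^sub>R b"
  have "G md \<le> ereal (1 - 1/2) * G a + ereal (1/2) * G b"
    using cv[unfolded econvex_def, rule_format, of "1/2" a b] by (simp add: md_def)
  then have "G md \<le> ereal ((ga + gb) / 2)"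
    using ga gb by (simp add: add_divide_distrib)
  then have "ereal \<beta> \<le> ereal ((ga + gb) / 2) + ereal ((norm (md - v))\<^sup>2 / (2 * \<tau>))"
    using lb[of md] add_right_mono order_trans by blast
  then have "\<beta> \<le> (ga + gb) / 2 + ((norm (a - v))\<^sup>2 + (norm (b - v))\<^sup>2 - (norm (a - b))\<^sup>2 / 2) / (4 * \<tau>)"
    using tau unfolding md_def norm_midpoint_diff_squared by (simp add: field_simps)
  then have "8 * \<tau> * \<beta> \<le> 8 * \<tau> * ((ga + gb) / 2 + ((norm (a - v))\<^sup>2 + (norm (b - v))\<^sup>2 - (norm (a - b))\<^sup>2 / 2) / (4 * \<tau>))"
    using tau by (intro mult_left_mono) auto
  also have "\<dots> = 4 * \<tau> * (ga + gb) + 2 * ((norm (a - v))\<^sup>2 + (norm (b - v))\<^sup>2) - (norm (a - b))\<^sup>2"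
    using tau by (simp add: field_simps)
  finally have "(norm (a - b))\<^sup>2 \<le> 4 * \<tau> * (ga + gb) + 2 * ((norm (a - v))\<^sup>2 + (norm (b - v))\<^sup>2) - 8 * \<tau> * \<beta>"
    by linarith
  moreover have "4 * \<tau> * ((ga + (norm (a - v))\<^sup>2 / (2 * \<tau>) - \<beta>) + (gb + (norm (b - v))\<^sup>2 / (2 * \<tau>) - \<beta>))
      = 4 * \<tau> * (ga + gb) + 2 * ((norm (a - v))\<^sup>2 + (norm (b - v))\<^sup>2) - 8 * \<tau> * \<beta>"
    using tau by (simp add: field_simps)
  ultimately show ?thesis
    by linarith
qed

lemma prox_objective_INF_finite:
  fixes G :: "'a::real_inner \<Rightarrow> ereal"
  assumes nm: "\<And>x. G x \<noteq> -\<infinity>" and tau: "\<tau> > 0" and c: "c \<in> subdiff G a"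
  obtains \<beta> where "(INF z. G z + ereal ((norm (z - v))\<^sup>2 / (2 * \<tau>))) = ereal \<beta>"
proof -
  let ?\<Phi> = "\<lambda>z. G z + ereal ((norm (z - v))\<^sup>2 / (2 * \<tau>))"
  obtain ga where ga: "G a = ereal ga"
    using c nm[of a] unfolding subdiff_def by (cases "G a") auto
  have "ereal (ga + inner c (v - a) - \<tau> * (norm c)\<^sup>2 / 2) \<le> ?\<Phi> z" for z
  proof (cases "G z")
    case (real gz)
    have "G a + ereal (inner c (z - a)) \<le> G z"
      using c unfolding subdiff_def by blast
    then have "ga + inner c (z - a) \<le> gz"
      using ga real by simp
    moreover have "inner c (z - a) = inner c (z - v) + inner c (v - a)"
      by (simp add: inner_diff_right)
    moreover have "- (norm c * norm (z - v)) \<le> inner c (z - v)"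
      using norm_cauchy_schwarz[of "-c" "z - v"] by simp
    moreover have "- (\<tau> * (norm c)\<^sup>2 / 2) \<le> - (norm c * norm (z - v)) + (norm (z - v))\<^sup>2 / (2 * \<tau>)"
      by (rule quadratic_lower_bound[OF tau])
    ultimately show ?thesis
      using real by simp
  qed (auto simp: nm)
  then have "ereal (ga + inner c (v - a) - \<tau> * (norm c)\<^sup>2 / 2) \<le> (INF z. ?\<Phi> z)"
    by (rule INF_greatest)
  moreover have "(INF z. ?\<Phi> z) \<le> ?\<Phi> a"
    by (rule INF_lower) simp
  moreover have "?\<Phi> a < \<infinity>"
    using ga by simp
  ultimately show ?thesis
    using that by (cases "INF z. ?\<Phi> z") auto
qed

lemma prox_minimizing_sequence_convergent:
  fixes G :: "'a::{real_inner,complete_space} \<Rightarrow> ereal"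
  assumes cv: "econvex G" and tau: "\<tau> > 0"
    and below: "\<And>z. ereal \<beta> \<le> G z + ereal ((norm (z - v))\<^sup>2 / (2 * \<tau>))"
    and Gx: "\<And>n. G (x n) = ereal (gx n)"
    and almost_min: "\<And>n. gx n + (norm (x n - v))\<^sup>2 / (2 * \<tau>) - \<beta> < inverse (real (Suc n))"
  shows "convergent x"
proof -
  have "Cauchy x"
  proof (rule Cauchy_of_dist_squared_bound)
    show "(dist (x m) (x n))\<^sup>2 \<le> 4 * \<tau> * inverse (real (Suc m)) + 4 * \<tau> * inverse (real (Suc n))" for m n
    proof -
      have "(dist (x m) (x n))\<^sup>2 \<le> 4 * \<tau> * ((gx m + (norm (x m - v))\<^sup>2 / (2 * \<tau>) - \<beta>)
          + (gx n + (norm (x n - v))\<^sup>2 / (2 * \<tau>) - \<beta>))"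
        using prox_objective_near_minimal_close[OF cv tau below Gx Gx] unfolding dist_norm .
      also have "\<dots> \<le> 4 * \<tau> * (inverse (real (Suc m)) + inverse (real (Suc n)))"
        using almost_min[of m] almost_min[of n] tau by (intro mult_left_mono) auto
      finally show ?thesis
        by (simp add: distrib_left)
    qed
    show "(\<lambda>n. 4 * \<tau> * inverse (real (Suc n))) \<longlonglongrightarrow> 0"
      using tendsto_mult_right_zero[OF LIMSEQ_inverse_real_of_nat] by simp
  qed
  then show ?thesis
    by (simp add: Cauchy_convergent_iff)
qed

lemma prox_minimizer_exists:
  fixes G :: "'a::{real_inner,complete_space} \<Rightarrow> ereal"
  assumes cv: "econvex G" and nm: "\<And>x. G x \<noteq> -\<infinity>" and lsc: "elsc G" and tau: "\<tau> > 0"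
    and c: "c \<in> subdiff G a"
  shows "\<exists>u. prox_minimizer \<tau> G v u"
proof -
  define q where "q z = (norm (z - v))\<^sup>2 / (2 * \<tau>)" for z
  obtain mr where mr: "(INF z. G z + ereal (q z)) = ereal mr"
    using prox_objective_INF_finite[OF nm tau c] unfolding q_def by blast
  have below: "ereal mr \<le> G z + ereal (q z)" for z
    using INF_lower[of z UNIV "\<lambda>z. G z + ereal (q z)"] mr by simp
  have "\<exists>z. G z + ereal (q z) < ereal (mr + inverse (real (Suc n)))" for n
  proof -
    have "(INF z. G z + ereal (q z)) < ereal (mr + inverse (real (Suc n)))"
      using mr by simp
    then show ?thesis
      by (simp add: INF_less_iff)
  qed
  then obtain x where x: "\<And>n. G (x n) + ereal (q (x n)) < ereal (mr + inverse (real (Suc n)))"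
    by metis
  define gx where "gx n = real_of_ereal (G (x n))" for n
  have Gx: "G (x n) = ereal (gx n)" for n
    using x[of n] nm[of "x n"] unfolding gx_def by (cases "G (x n)") auto
  have almost_min: "gx n + q (x n) - mr < inverse (real (Suc n))" for n
    using x[of n] Gx[of n] by simp
  obtain u where xu: "x \<longlonglongrightarrow> u"
    using prox_minimizing_sequence_convergent[OF cv tau below[unfolded q_def] Gx almost_min[unfolded q_def]]
    unfolding convergent_def by blast
  have "G u \<le> ereal (mr - q u)"
  proof (rule elsc_le_limit[OF lsc xu])
    show "G (x n) \<le> ereal (mr + inverse (real (Suc n)) - q (x n))" for n
      using almost_min[of n] Gx[of n] by simp
    have "(\<lambda>n. q (x n)) \<longlonglongrightarrow> q u"
      unfolding q_def using tau by (intro tendsto_intros xu) auto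
    then have "(\<lambda>n. mr + inverse (real (Suc n)) - q (x n)) \<longlonglongrightarrow> mr + 0 - q u"
      by (intro tendsto_intros LIMSEQ_inverse_real_of_nat)
    then show "(\<lambda>n. mr + inverse (real (Suc n)) - q (x n)) \<longlonglongrightarrow> mr - q u"
      by simp
  qed
  then have "G u + ereal (q u) \<le> ereal (mr - q u) + ereal (q u)"
    by (rule add_right_mono)
  then have "G u + ereal (q u) \<le> G z + ereal (q z)" for z
    using below[of z] by simp
  then show ?thesis
    unfolding prox_minimizer_def q_def by blast
qed

lemma prox_is_minimizer:
  fixes G :: "'a::{real_inner,complete_space} \<Rightarrow> ereal"
  assumes cv: "econvex G" and nm: "\<And>x. G x \<noteq> -\<infinity>" and lsc: "elsc G" and tau: "\<tau> > 0"
    and c: "c \<in> subdiff G a"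
  shows "prox_minimizer \<tau> G v (prox \<tau> G v)"
proof -
  have finite: "G u = ereal (real_of_ereal (G u))" if "prox_minimizer \<tau> G v u" for u
    using prox_minimizer_less_infinity[OF that, of a] c nm[of u] unfolding subdiff_def
    by (cases "G u") auto
  obtain u where u: "prox_minimizer \<tau> G v u"
    using prox_minimizer_exists[OF cv nm lsc tau c] by blast
  have "prox \<tau> G v = (THE u. prox_minimizer \<tau> G v u)"
    unfolding prox_def prox_minimizer_def ..
  also have "\<dots> = u"
  proof (rule the_equality)
    show "w = u" if "prox_minimizer \<tau> G v w" for w
      using prox_minimizer_unique[OF cv tau u finite[OF u] that finite[OF that]] .
  qed (rule u)
  finally show ?thesis
    using u by simp
qed

lemma proximal_gradient_step_decrease:
  fixes f :: "'a::real_inner \<Rightarrow> real"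
  assumes df: "\<And>z. (f has_derivative (\<lambda>h. inner (df z) h)) (at z)"
    and lip: "\<And>a b. norm (df a - df b) \<le> L * norm (a - b)"
    and cv: "econvex G" and tau: "\<tau> > 0"
    and u: "prox_minimizer \<tau> G (z - \<tau> *\<^sub>R df z) u"
    and gz: "G z = ereal gz" and gu: "G u = ereal gu"
  shows "f u + gu \<le> f z + gz - (2 - \<tau> * L) / (2 * \<tau>) * (norm (u - z))\<^sup>2"
proof -
  have "gu + inner ((1/\<tau>) *\<^sub>R ((z - \<tau> *\<^sub>R df z) - u)) (z - u) \<le> gz"
    using prox_minimizer_variational_inequality[OF cv tau u gu, of z] gz gu by simp
  moreover have "inner ((1/\<tau>) *\<^sub>R ((z - \<tau> *\<^sub>R df z) - u)) (z - u)
      = (norm (u - z))\<^sup>2 / \<tau> + inner (df z) (u - z)"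
  proof -
    have "(1/\<tau>) *\<^sub>R ((z - \<tau> *\<^sub>R df z) - u) = (1/\<tau>) *\<^sub>R (z - u) - df z"
      using tau by (simp add: algebra_simps)
    then have "inner ((1/\<tau>) *\<^sub>R ((z - \<tau> *\<^sub>R df z) - u)) (z - u)
        = (1/\<tau>) * inner (z - u) (z - u) - inner (df z) (z - u)"
      by (simp add: inner_diff_left)
    also have "inner (z - u) (z - u) = (norm (u - z))\<^sup>2"
      by (simp add: power2_norm_eq_inner norm_minus_commute[of u z])
    also have "inner (df z) (z - u) = - inner (df z) (u - z)"
      by (simp add: inner_diff_right)
    finally show ?thesis
      by simp
  qed
  moreover have "f u \<le> f z + inner (df z) (u - z) + L / 2 * (norm (u - z))\<^sup>2"
    by (rule lipschitz_gradient_upper_bound[OF df lip])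
  moreover have "(2 - \<tau> * L) / (2 * \<tau>) * (norm (u - z))\<^sup>2 = (norm (u - z))\<^sup>2 / \<tau> - L / 2 * (norm (u - z))\<^sup>2"
    using tau by (simp add: field_simps)
  ultimately show ?thesis
    by linarith
qed

lemma proximal_gradient_directional_descent:
  fixes f :: "'a::{real_inner,complete_space} \<Rightarrow> real"
  assumes f_convex: "convex_on UNIV f"
    and df: "\<And>z. (f has_derivative (\<lambda>h. inner (df z) h)) (at z)"
    and lip: "\<And>a b. norm (df a - df b) \<le> L * norm (a - b)"
    and cv: "econvex G" and nm: "\<And>x. G x \<noteq> -\<infinity>" and lsc: "elsc G" and tau: "\<tau> > 0"
    and c: "c \<in> subdiff G (\<zeta> 0)"
    and iter: "\<And>j. j < m \<Longrightarrow> \<zeta> (Suc j) = prox \<tau> G (\<zeta> j - \<tau> *\<^sub>R df (\<zeta> j))"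
  shows "inner (c + df (\<zeta> 0)) (\<zeta> m - \<zeta> 0)
    \<le> - ((2 - \<tau> * L) / (2 * \<tau>) * (\<Sum>j<m. (norm (\<zeta> (Suc j) - \<zeta> j))\<^sup>2))"
proof -
  let ?\<kappa> = "(2 - \<tau> * L) / (2 * \<tau>)"
  have min: "prox_minimizer \<tau> G (\<zeta> j - \<tau> *\<^sub>R df (\<zeta> j)) (\<zeta> (Suc j))" if "j < m" for j
    unfolding iter[OF that] by (rule prox_is_minimizer[OF cv nm lsc tau c])
  define g where "g j = real_of_ereal (G (\<zeta> j))" for j
  have G_finite: "G (\<zeta> j) = ereal (g j)" if "j \<le> m" for j
  proof -
    have "G (\<zeta> 0) < \<infinity>"
      using c unfolding subdiff_def by blast
    then have "G (\<zeta> j) < \<infinity>"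
      using prox_minimizer_less_infinity[OF min] that by (cases j) auto
    then show ?thesis
      using nm[of "\<zeta> j"] unfolding g_def by (cases "G (\<zeta> j)") auto
  qed
  define \<Phi> where "\<Phi> j = f (\<zeta> j) + g j" for j
  have "?\<kappa> * (norm (\<zeta> (Suc j) - \<zeta> j))\<^sup>2 \<le> \<Phi> j - \<Phi> (Suc j)" if "j < m" for j
    using proximal_gradient_step_decrease[OF df lip cv tau min[OF that]] G_finite that
    unfolding \<Phi>_def by force
  then have "(\<Sum>j<m. ?\<kappa> * (norm (\<zeta> (Suc j) - \<zeta> j))\<^sup>2) \<le> (\<Sum>j<m. \<Phi> j - \<Phi> (Suc j))"
    by (intro sum_mono) simp
  then have "f (\<zeta> m) + g m \<le> f (\<zeta> 0) + g 0 - ?\<kappa> * (\<Sum>j<m. (norm (\<zeta> (Suc j) - \<zeta> j))\<^sup>2)"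
    unfolding sum_lessThan_telescope' sum_distrib_left[symmetric] by (simp add: \<Phi>_def)
  moreover have "f (\<zeta> 0) + inner (df (\<zeta> 0)) (\<zeta> m - \<zeta> 0) \<le> f (\<zeta> m)"
    by (rule convex_on_gradient_lower_bound[OF f_convex df])
  moreover have "g 0 + inner c (\<zeta> m - \<zeta> 0) \<le> g m"
  proof -
    have "G (\<zeta> 0) + ereal (inner c (\<zeta> m - \<zeta> 0)) \<le> G (\<zeta> m)"
      using c unfolding subdiff_def by blast
    then show ?thesis
      using G_finite[of 0] G_finite[of m] by simp
  qed
  ultimately show ?thesis
    by (simp add: inner_add_left)
qed

lemma proximal_gradient_directional_descent_shifted:
  fixes f :: "'a::{real_inner,complete_space} \<Rightarrow> real"
  assumes f_convex: "convex_on UNIV f"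
    and df: "\<And>z. (f has_derivative (\<lambda>h. inner (df z) h)) (at z)"
    and lip: "\<And>a b. norm (df a - df b) \<le> L * norm (a - b)"
    and cv: "econvex G" and nm: "\<And>x. G x \<noteq> -\<infinity>" and lsc: "elsc G" and tau: "\<tau> > 0"
    and c: "c \<in> subdiff G (\<zeta> 0)"
    and iter: "\<And>j. j < m \<Longrightarrow> \<zeta> (Suc j) = prox \<tau> G (\<zeta> j - \<tau> *\<^sub>R (df (\<zeta> j) + w))"
  shows "inner (c + df (\<zeta> 0) + w) (\<zeta> m - \<zeta> 0)
    \<le> - ((2 - \<tau> * L) / (2 * \<tau>) * (\<Sum>j<m. (norm (\<zeta> (Suc j) - \<zeta> j))\<^sup>2))"
proof -
  have "convex_on UNIV (\<lambda>z. inner w z)"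
    by (rule convex_onI) (simp_all add: algebra_simps)
  with f_convex have "convex_on UNIV (\<lambda>z. f z + inner w z)"
    by (rule convex_on_add)
  moreover have "((\<lambda>z. f z + inner w z) has_derivative (\<lambda>h. inner (df z + w) h)) (at z)" for z
    by (rule derivative_eq_intros df refl | simp add: inner_add_left)+
  moreover have "norm ((df a + w) - (df b + w)) \<le> L * norm (a - b)" for a b
    using lip[of a b] by simp
  ultimately have "inner (c + (df (\<zeta> 0) + w)) (\<zeta> m - \<zeta> 0)
      \<le> - ((2 - \<tau> * L) / (2 * \<tau>) * (\<Sum>j<m. (norm (\<zeta> (Suc j) - \<zeta> j))\<^sup>2))"
    using iter by (rule proximal_gradient_directional_descent[where \<zeta>=\<zeta>, OF _ _ _ cv nm lsc tau c])
  then show ?thesis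
    by (simp add: add.assoc)
qed

theorem mainTheorem2:
  fixes R :: "'x::{real_inner,complete_space} \<Rightarrow> 'h::{real_inner,complete_space}"
    and P :: "'h \<Rightarrow> 'x"
    and \<mu> :: real
    and F :: "'x \<Rightarrow> real" and gradF :: "'x \<Rightarrow> 'x"
    and G :: "'x \<Rightarrow> ereal" and xk :: 'x
    and FH :: "'h \<Rightarrow> real" and gradFH :: "'h \<Rightarrow> 'h" and LH :: real
    and GHk :: "'h \<Rightarrow> ereal" and \<tau>H :: real
    and \<zeta> :: "nat \<Rightarrow> 'h" and m :: nat
  assumes R_lin: "bounded_linear R"
    and P_lin: "bounded_linear P"
    and mu_pos: "\<mu> > 0"
    and adj: "\<And>x y. inner (R x) y = inner x (\<mu> *\<^sub>R P y)"
    and F_diff: "\<And>x. (F has_derivative (\<lambda>h. inner (gradF x) h)) (at x)"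
    and G_convex: "econvex G" and G_proper: "eproper G" and G_lsc: "elsc G"
    and FH_convex: "convex_on UNIV FH"
    and FH_diff: "\<And>z. (FH has_derivative (\<lambda>h. inner (gradFH z) h)) (at z)"
    and LH_nonneg: "LH \<ge> 0"
    and FH_lip: "\<And>a b. norm (gradFH a - gradFH b) \<le> LH * norm (a - b)"
    and GH_convex: "econvex GHk" and GH_proper: "eproper GHk" and GH_lsc: "elsc GHk"
    and tau_pos: "\<tau>H > 0"
    and eps_pos: "2 - \<tau>H * LH > 0"
    and coherence: "R ` subdiff G xk \<subseteq> subdiff GHk (\<zeta> 0)"
    and iter: "\<And>j. j < m \<Longrightarrow>
       \<zeta> (Suc j) = prox \<tau>H GHk (\<zeta> j - \<tau>H *\<^sub>R
          (gradFH (\<zeta> j) + (R (gradF xk) - gradFH (\<zeta> 0))))"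
  shows "(SUP g\<in>subdiff G xk. ereal (inner (g + gradF xk) (P (\<zeta> m - \<zeta> 0))))
           \<le> ereal (- ((2 - \<tau>H * LH) / (2 * \<mu> * \<tau>H))
                      * (\<Sum>j<m. (norm (\<zeta> (Suc j) - \<zeta> j))\<^sup>2))
       \<and> - ((2 - \<tau>H * LH) / (2 * \<mu> * \<tau>H)) * (\<Sum>j<m. (norm (\<zeta> (Suc j) - \<zeta> j))\<^sup>2) \<le> 0"
  proof -
  let ?\<kappa> = "(2 - \<tau>H * LH) / (2 * \<mu> * \<tau>H)"
  let ?S = "\<Sum>j<m. (norm (\<zeta> (Suc j) - \<zeta> j))\<^sup>2"
  have bound: "inner (g + gradF xk) (P (\<zeta> m - \<zeta> 0)) \<le> - ?\<kappa> * ?S" if g: "g \<in> subdiff G xk" for g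
  proof -
    have "inner (R g + gradFH (\<zeta> 0) + (R (gradF xk) - gradFH (\<zeta> 0))) (\<zeta> m - \<zeta> 0)
        \<le> - ((2 - \<tau>H * LH) / (2 * \<tau>H) * ?S)"
    proof (rule proximal_gradient_directional_descent_shifted[OF FH_convex FH_diff FH_lip GH_convex _ GH_lsc tau_pos])
      show "GHk z \<noteq> -\<infinity>" for z
        using GH_proper unfolding eproper_def by blast
      show "R g \<in> subdiff GHk (\<zeta> 0)"
        using coherence g by blast
    qed (rule iter)
    moreover have "inner (R g + gradFH (\<zeta> 0) + (R (gradF xk) - gradFH (\<zeta> 0))) (\<zeta> m - \<zeta> 0)
        = \<mu> * inner (g + gradF xk) (P (\<zeta> m - \<zeta> 0))"
      using adj[of "g + gradF xk" "\<zeta> m - \<zeta> 0"] linear_add[OF bounded_linear.linear[OF R_lin]] by simp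
    moreover have "\<mu> * (- ?\<kappa> * ?S) = - ((2 - \<tau>H * LH) / (2 * \<tau>H) * ?S)"
      using mu_pos tau_pos by (simp add: field_simps)
    ultimately have "\<mu> * inner (g + gradF xk) (P (\<zeta> m - \<zeta> 0)) \<le> \<mu> * (- ?\<kappa> * ?S)"
      by linarith
    then show ?thesis
      by (rule mult_le_cancel_left_pos[OF mu_pos, THEN iffD1])
  qed
  have "0 \<le> ?\<kappa> * ?S"
    using eps_pos mu_pos tau_pos by (intro mult_nonneg_nonneg sum_nonneg) auto
  then show ?thesis
    using bound by (auto intro: SUP_least)
qed

end
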